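(* Let $S(t,x,y,u,v)=\sum_\pi t^{|\pi|}x^{\mathrm{lmax}(\pi)}y^{\mathrm{rmax}(\pi)}u^{\mathrm{lmin}(\pi)}v^{\mathrm{rmin}(\pi)}$ over all separable permutations, and $I(t,x,y,u,v)$ the same sum over irreducible separable permutations. Let $S(t,y,u,v)=\sum_\pi t^{|\pi|}y^{\mathrm{rmax}(\pi)}u^{\mathrm{lmin}(\pi)}v^{\mathrm{rmin}(\pi)}$ and $S(t,x,u,v)=\sum_\pi t^{|\pi|}x^{\mathrm{lmax}(\pi)}u^{\mathrm{lmin}(\pi)}v^{\mathrm{rmin}(\pi)}$, both over all separable permutations. Let $S(t,z)=\sum_\pi t^{|\pi|}z^{\mathrm{rmax}(\pi)}$ over all separable permutations, and $$E(t,z_1,z_2,z_3)=z_1z_2z_3t+\frac{(S(t,z_1)+1)(S(t,z_2)+1)(S(t,z_3)+1)\,t^2z_1^2z_2z_3}{(1-S(t,z_1)S(t,z_3))(1-S(t,z_1)S(t,z_2))}.$$ Then $$I(t,x,y,u,v)=xyuvt+E(t,x,y,u)\,S(t,y,u,v),$$ the corresponding sum over reducible separable permutations equals $E(t,y,x,v)\,S(t,x,u,v)$, and $$S(t,x,y,u,v)=xyuvt+E(t,x,y,u)\,S(t,y,u,v)+E(t,y,x,v)\,S(t,x,u,v).$$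
   Context: A permutation of length $n$ is a word $\pi=\pi_1\cdots\pi_n$ containing each element of $[n]$ exactly once; $|\pi|=n$. For $\pi$ of length $m$, $\sigma$ of length $n$: $\pi\oplus\sigma=\pi_1\cdots\pi_m(\sigma_1+m)\cdots(\sigma_n+m)$, $\pi\ominus\sigma=(\pi_1+n)\cdots(\pi_m+n)\sigma_1\cdots\sigma_n$. Separable permutations are those of length $\ge1$ obtained from $1$ by repeatedly applying $\oplus,\ominus$ (equivalently, avoiding $2413$ and $3142$). The permutation $1$ is irreducible; a permutation of length $n\ge2$ is irreducible if there is no $i$, $2\le i\le n$, such that every element of $\pi_1\cdots\pi_{i-1}$ is less than every element of $\pi_i\cdots\pi_n$; reducible means not irreducible (length $\ge2$). $\pi_i$ is a left-to-right maximum (minimum) if $\pi_i>\pi_j$ ($\pi_i<\pi_j$) for all $j<i$, a right-to-left maximum (minimum) if $\pi_i>\pi_j$ ($\pi_i<\pi_j$) for all $j>i$; $\mathrm{lmax},\mathrm{lmin},\mathrm{rmax},\mathrm{rmin}$ count these. *)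

theory Defs
  imports "HOL-Computational_Algebra.Formal_Power_Series"
begin

text \<open>Permutations are lists of naturals: p = p_1 ... p_n containing each of 1..n once.\<close>

definition oplus :: "nat list \<Rightarrow> nat list \<Rightarrow> nat list" where
  "oplus p s = p @ map (\<lambda>a. a + length p) s"

definition ominus :: "nat list \<Rightarrow> nat list \<Rightarrow> nat list" where
  "ominus p s = map (\<lambda>a. a + length s) p @ s"

inductive separable :: "nat list \<Rightarrow> bool" where
  sep_one: "separable [1]"
| sep_oplus: "separable p \<Longrightarrow> separable s \<Longrightarrow> separable (oplus p s)"
| sep_ominus: "separable p \<Longrightarrow> separable s \<Longrightarrow> separable (ominus p s)"

text \<open>Irreducible: p = 1, or length n >= 2 and there is no i with 2 <= i <= n such that
  every element of p_1..p_(i-1) is less than every element of p_i..p_n.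
  (0-based: the prefix is take (i-1) p, the suffix drop (i-1) p.)\<close>
definition irreducible_perm :: "nat list \<Rightarrow> bool" where
  "irreducible_perm p \<longleftrightarrow> p = [1] \<or>
     (length p \<ge> 2 \<and> \<not> (\<exists>i. 2 \<le> i \<and> i \<le> length p \<and>
        (\<forall>a \<in> set (take (i - 1) p). \<forall>b \<in> set (drop (i - 1) p). a < b)))"

definition reducible_perm :: "nat list \<Rightarrow> bool" where
  "reducible_perm p \<longleftrightarrow> length p \<ge> 2 \<and> \<not> irreducible_perm p"

definition lmax :: "nat list \<Rightarrow> nat" where
  "lmax p = card {i. i < length p \<and> (\<forall>j<i. p ! i > p ! j)}"
definition lmin :: "nat list \<Rightarrow> nat" where
  "lmin p = card {i. i < length p \<and> (\<forall>j<i. p ! i < p ! j)}"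
definition rmax :: "nat list \<Rightarrow> nat" where
  "rmax p = card {i. i < length p \<and> (\<forall>j. i < j \<and> j < length p \<longrightarrow> p ! i > p ! j)}"
definition rmin :: "nat list \<Rightarrow> nat" where
  "rmin p = card {i. i < length p \<and> (\<forall>j. i < j \<and> j < length p \<longrightarrow> p ! i < p ! j)}"

definition GF :: "(nat list \<Rightarrow> bool) \<Rightarrow> (nat list \<Rightarrow> real) \<Rightarrow> real fps" where
  "GF P w = Abs_fps (\<lambda>n. \<Sum>p | length p = n \<and> P p. w p)"

definition S_z :: "real \<Rightarrow> real fps" where
  "S_z z = GF separable (\<lambda>p. z ^ rmax p)"

definition E_fps :: "real \<Rightarrow> real \<Rightarrow> real \<Rightarrow> real fps" where
  "E_fps z1 z2 z3 =
     fps_const (z1 * z2 * z3) * fps_X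
   + (S_z z1 + 1) * (S_z z2 + 1) * (S_z z3 + 1) * fps_X ^ 2 * fps_const (z1 ^ 2 * z2 * z3)
     * inverse ((1 - S_z z1 * S_z z3) * (1 - S_z z1 * S_z z2))"

end

theory Submission
  imports Defs
begin

text \<open>
  A separable permutation other than 1 is either a direct sum \<open>\<alpha> \<oplus> \<beta>\<close> or a skew sum
  \<open>\<alpha> \<ominus> \<beta>\<close> of separable permutations, never both, and it factors uniquely with a first
  factor \<open>\<alpha>\<close> that is not itself a sum of the same kind. Under \<open>\<oplus>\<close> the statistics lmax and
  rmin add up, while rmax comes from \<open>\<beta>\<close> and lmin from \<open>\<alpha>\<close>; under \<open>\<ominus>\<close> the roles of
  maxima and minima swap. Translated into generating functions this yields a linear system for
  the sum-indecomposable (i.e. irreducible) and the skew-indecomposable classes over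
  \<open>S(t,z)\<close>; solving it shows that \<open>E(t,x,y,u)\<close> counts the skew-indecomposable separable
  permutations by lmax, rmax and lmin. An irreducible separable permutation other than 1 is a
  skew sum, which gives the formula for \<open>I\<close>; reversal exchanges direct and skew sums, which
  gives the reducible part, and the two parts add up to \<open>S\<close>.
\<close>

unbundle fps_syntax

section \<open>Direct and skew sums\<close>

lemma length_oplus [simp]: "length (oplus a b) = length a + length b"
  by (simp add: oplus_def)

lemma length_ominus [simp]: "length (ominus a b) = length a + length b"
  by (simp add: ominus_def)

lemma separable_range: "separable p \<Longrightarrow> p \<noteq> [] \<and> set p \<subseteq> {1..length p}"
  by (induction rule: separable.induct) (auto simp: oplus_def ominus_def)

lemma oplus_assoc: "oplus (oplus a b) c = oplus a (oplus b c)"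
  by (simp add: oplus_def add.assoc)

lemma ominus_assoc: "ominus (ominus a b) c = ominus a (ominus b c)"
  by (simp add: ominus_def add.assoc add.commute)

lemma rev_oplus: "rev (oplus a b) = ominus (rev b) (rev a)"
  by (simp add: oplus_def ominus_def rev_map)

lemma rev_ominus: "rev (ominus a b) = oplus (rev b) (rev a)"
  by (simp add: oplus_def ominus_def rev_map)

lemma separable_one: "separable [Suc 0]"
  using sep_one by simp

lemma separable_rev: "separable p \<Longrightarrow> separable (rev p)"
  by (induction rule: separable.induct) (auto simp: rev_oplus rev_ominus intro: separable_one separable.intros)

text \<open>For a permutation \<open>p\<close>, \<open>decomposable (<) p\<close> says \<open>p = \<sigma> \<oplus> \<tau>\<close> and
  \<open>decomposable (>) p\<close> says \<open>p = \<sigma> \<ominus> \<tau>\<close> with \<open>\<sigma>, \<tau>\<close> nonempty.\<close>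

definition decomposable :: "('a \<Rightarrow> 'a \<Rightarrow> bool) \<Rightarrow> 'a list \<Rightarrow> bool" where
  "decomposable R p \<longleftrightarrow>
     (\<exists>i. 0 < i \<and> i < length p \<and> (\<forall>a \<in> set (take i p). \<forall>b \<in> set (drop i p). R a b))"

lemma decomposable_length: "decomposable R p \<Longrightarrow> 2 \<le> length p"
  by (auto simp: decomposable_def)

lemma decomposable_appendI:
  "a \<noteq> [] \<Longrightarrow> c \<noteq> [] \<Longrightarrow> (\<And>x y. x \<in> set a \<Longrightarrow> y \<in> set c \<Longrightarrow> R x y) \<Longrightarrow> decomposable R (a @ c)"
  unfolding decomposable_def by (rule exI[of _ "length a"]) auto

lemma decomposable_hd_last:
  assumes "decomposable R p"
  shows "R (hd p) (last p)"
proof -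
  from assms obtain i where i: "0 < i" "i < length p"
    and R: "\<forall>a \<in> set (take i p). \<forall>b \<in> set (drop i p). R a b"
    by (auto simp: decomposable_def)
  have "hd p = hd (take i p)" "take i p \<noteq> []"
    using i by (auto simp: hd_take)
  moreover have "last p = last (drop i p)" "drop i p \<noteq> []"
    using i by auto
  ultimately show ?thesis
    using R by (metis hd_in_set last_in_set)
qed

lemma decomposable_map: "decomposable R (map f p) \<longleftrightarrow> decomposable (\<lambda>a b. R (f a) (f b)) p"
  by (simp add: decomposable_def take_map drop_map)

lemma decomposable_rev: "decomposable R (rev p) \<longleftrightarrow> decomposable (\<lambda>a b. R b a) p"
proof -
  have *: "decomposable (\<lambda>a b. R b a) p" if "decomposable R (rev p)" for R and p :: "'a list"
  proof -
    from that obtain i where "0 < i" "i < length p"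
      and "\<forall>a \<in> set (take i (rev p)). \<forall>b \<in> set (drop i (rev p)). R a b"
      by (auto simp: decomposable_def)
    then show ?thesis unfolding decomposable_def
      by (intro exI[of _ "length p - i"]) (auto simp: take_rev drop_rev)
  qed
  show ?thesis using *[of R p] *[of "\<lambda>a b. R b a" "rev p"] by auto
qed

lemma reducible_perm_iff: "reducible_perm p \<longleftrightarrow> decomposable (<) p"
proof -
  have "decomposable (<) p \<longleftrightarrow>
      (\<exists>i. 2 \<le> i \<and> i \<le> length p \<and>
        (\<forall>a \<in> set (take (i - 1) p). \<forall>b \<in> set (drop (i - 1) p). a < b))"
    unfolding decomposable_def
  proof (intro iffI; elim exE conjE)
    fix i assume "0 < i" "i < length p"
      "\<forall>a \<in> set (take i p). \<forall>b \<in> set (drop i p). a < b"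
    then show "\<exists>i. 2 \<le> i \<and> i \<le> length p \<and>
        (\<forall>a \<in> set (take (i - 1) p). \<forall>b \<in> set (drop (i - 1) p). a < b)"
      by (intro exI[of _ "Suc i"]) auto
  next
    fix i assume "2 \<le> i" "i \<le> length p"
      "\<forall>a \<in> set (take (i - 1) p). \<forall>b \<in> set (drop (i - 1) p). a < b"
    then show "\<exists>i. 0 < i \<and> i < length p \<and>
        (\<forall>a \<in> set (take i p). \<forall>b \<in> set (drop i p). a < b)"
      by (intro exI[of _ "i - 1"]) auto
  qed
  then show ?thesis
    using decomposable_length[of "(<)" p]
    by (auto simp: reducible_perm_def irreducible_perm_def)
qed

lemma oplus_blocks_less:
  "separable a \<Longrightarrow> separable b \<Longrightarrow> x \<in> set a \<Longrightarrow> y \<in> set b \<Longrightarrow> x < y + length a"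
  using separable_range[of a] separable_range[of b] by fastforce

lemma ominus_blocks_greater:
  "separable a \<Longrightarrow> separable b \<Longrightarrow> x \<in> set a \<Longrightarrow> y \<in> set b \<Longrightarrow> y < x + length b"
  using separable_range[of a] separable_range[of b] by fastforce

lemma decomposable_oplus: "separable a \<Longrightarrow> separable b \<Longrightarrow> decomposable (<) (oplus a b)"
  unfolding oplus_def
  by (rule decomposable_appendI) (use separable_range in \<open>auto intro: oplus_blocks_less\<close>)

lemma decomposable_ominus: "separable a \<Longrightarrow> separable b \<Longrightarrow> decomposable (>) (ominus a b)"
  unfolding ominus_def
  by (rule decomposable_appendI) (use separable_range in \<open>auto intro: ominus_blocks_greater\<close>)

lemma not_decomposable_both:
  fixes p :: "'a::preorder list"
  shows "decomposable (<) p \<Longrightarrow> decomposable (>) p \<Longrightarrow> False"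
  using decomposable_hd_last[of "(<)" p] decomposable_hd_last[of "(>)" p] less_asym by blast

lemma not_decomposable_one: "\<not> decomposable R [x]"
  using decomposable_length by fastforce

lemma separable_cases_decomposable:
  assumes "separable p"
  obtains "p = [1]" "\<not> decomposable (<) p" "\<not> decomposable (>) p"
  | a b where "separable a" "separable b" "p = oplus a b" "decomposable (<) p" "\<not> decomposable (>) p"
  | a b where "separable a" "separable b" "p = ominus a b" "decomposable (>) p" "\<not> decomposable (<) p"
  using assms
proof cases
  case sep_one
  then show thesis using that(1) by (simp add: not_decomposable_one)
next
  case (sep_oplus a b)
  then have "decomposable (<) p" by (simp add: decomposable_oplus)
  then show thesis using that(2) sep_oplus not_decomposable_both by blast
next
  case (sep_ominus a b)
  then have "decomposable (>) p" by (simp add: decomposable_ominus)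
  then show thesis using that(3) sep_ominus not_decomposable_both by blast
qed

lemma separable_direct_sum_iff:
  "separable p \<and> decomposable (<) p \<longleftrightarrow> (\<exists>a b. separable a \<and> separable b \<and> p = oplus a b)"
proof
  assume "separable p \<and> decomposable (<) p"
  then show "\<exists>a b. separable a \<and> separable b \<and> p = oplus a b"
    by (metis separable_cases_decomposable)
qed (use sep_oplus decomposable_oplus in blast)

lemma separable_skew_sum_iff:
  "separable p \<and> decomposable (>) p \<longleftrightarrow> (\<exists>a b. separable a \<and> separable b \<and> p = ominus a b)"
proof
  assume "separable p \<and> decomposable (>) p"
  then show "\<exists>a b. separable a \<and> separable b \<and> p = ominus a b"
    by (metis separable_cases_decomposable)
qed (use sep_ominus decomposable_ominus in blast)

lemma separable_not_decomposable_iff: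
  "separable p \<and> \<not> decomposable (<) p \<longleftrightarrow> p = [1] \<or> separable p \<and> decomposable (>) p"
  "separable p \<and> \<not> decomposable (>) p \<longleftrightarrow> p = [1] \<or> separable p \<and> decomposable (<) p"
  by (metis separable_cases_decomposable not_decomposable_one sep_one)+

lemma separable_irreducible_iff: "separable p \<Longrightarrow> irreducible_perm p \<longleftrightarrow> \<not> decomposable (<) p"
proof -
  assume "separable p"
  then have "p = [1] \<or> 2 \<le> length p"
    using separable_range[of p] by (cases p rule: remdups_adj.cases) auto
  then show ?thesis
    using reducible_perm_iff[of p]
    by (auto simp: reducible_perm_def irreducible_perm_def not_decomposable_one)
qed

lemma oplus_factorization_exists:
  "separable a \<Longrightarrow> separable b \<Longrightarrow>
    \<exists>\<alpha> \<beta>. separable \<alpha> \<and> \<not> decomposable (<) \<alpha> \<and> separable \<beta> \<and> oplus a b = oplus \<alpha> \<beta>"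
proof (induction "length a" arbitrary: a b rule: less_induct)
  case less
  show ?case
  proof (cases "decomposable (<) a")
    case True
    then obtain a1 a2 where a: "separable a1" "separable a2" "a = oplus a1 a2"
      using less.prems separable_direct_sum_iff by blast
    have "length a1 < length a"
      using a separable_range[of a2] by simp
    with less.hyps obtain \<alpha> \<beta> where
      "separable \<alpha>" "\<not> decomposable (<) \<alpha>" "separable \<beta>" "oplus a1 (oplus a2 b) = oplus \<alpha> \<beta>"
      using a less.prems sep_oplus by blast
    then show ?thesis using a oplus_assoc by metis
  qed (use less.prems in blast)
qed

lemma ominus_factorization_exists:
  "separable a \<Longrightarrow> separable b \<Longrightarrow>
    \<exists>\<alpha> \<beta>. separable \<alpha> \<and> \<not> decomposable (>) \<alpha> \<and> separable \<beta> \<and> ominus a b = ominus \<alpha> \<beta>"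
proof (induction "length a" arbitrary: a b rule: less_induct)
  case less
  show ?case
  proof (cases "decomposable (>) a")
    case True
    then obtain a1 a2 where a: "separable a1" "separable a2" "a = ominus a1 a2"
      using less.prems separable_skew_sum_iff by blast
    have "length a1 < length a"
      using a separable_range[of a2] by simp
    with less.hyps obtain \<alpha> \<beta> where
      "separable \<alpha>" "\<not> decomposable (>) \<alpha>" "separable \<beta>" "ominus a1 (ominus a2 b) = ominus \<alpha> \<beta>"
      using a less.prems sep_ominus by blast
    then show ?thesis using a ominus_assoc by metis
  qed (use less.prems in blast)
qed

lemma oplus_longer_prefix_decomposable:
  assumes "separable a" "separable b" "oplus a b = oplus a' b'" "length a < length a'"
  shows "decomposable (<) a'"
proof -
  define k where "k = length a' - length a"
  have a': "a' = a @ take k (map (\<lambda>z. z + length a) b)"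
    using arg_cong[OF assms(3), of "take (length a')"] assms(4) by (simp add: oplus_def k_def)
  have "k \<le> length b" "0 < k"
    using arg_cong[OF assms(3), of length] assms(4) unfolding k_def by auto
  then show ?thesis
    unfolding a' using assms(1,2) separable_range
    by (intro decomposable_appendI) (auto simp: take_map dest: in_set_takeD intro: oplus_blocks_less)
qed

lemma ominus_longer_prefix_decomposable:
  assumes "separable a" "separable b" "ominus a b = ominus a' b'" "length a < length a'"
  shows "decomposable (>) a'"
proof -
  define k where "k = length a' - length a"
  have a': "map (\<lambda>z. z + length b') a' = map (\<lambda>z. z + length b) a @ take k b"
    using arg_cong[OF assms(3), of "take (length a')"] assms(4) by (simp add: ominus_def k_def)
  have "k \<le> length b" "0 < k"
    using arg_cong[OF assms(3), of length] assms(4) unfolding k_def by auto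
  then have "decomposable (>) (map (\<lambda>z. z + length b') a')"
    unfolding a' using assms(1,2) separable_range
    by (intro decomposable_appendI) (auto dest: in_set_takeD intro: ominus_blocks_greater)
  then show ?thesis
    by (simp add: decomposable_map)
qed

lemma oplus_factorization_unique:
  assumes "separable \<alpha>" "\<not> decomposable (<) \<alpha>" "separable \<beta>"
    and "separable \<alpha>'" "\<not> decomposable (<) \<alpha>'" "separable \<beta>'"
    and eq: "oplus \<alpha> \<beta> = oplus \<alpha>' \<beta>'"
  shows "\<alpha> = \<alpha>' \<and> \<beta> = \<beta>'"
proof -
  have "length \<alpha> = length \<alpha>'"
    using oplus_longer_prefix_decomposable[OF assms(1,3) eq]
      oplus_longer_prefix_decomposable[OF assms(4,6) eq[symmetric]] assms(2,5)
    by (meson linorder_neqE_nat)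
  then show ?thesis
    using eq by (auto simp: oplus_def)
qed

lemma ominus_factorization_unique:
  assumes "separable \<alpha>" "\<not> decomposable (>) \<alpha>" "separable \<beta>"
    and "separable \<alpha>'" "\<not> decomposable (>) \<alpha>'" "separable \<beta>'"
    and eq: "ominus \<alpha> \<beta> = ominus \<alpha>' \<beta>'"
  shows "\<alpha> = \<alpha>' \<and> \<beta> = \<beta>'"
proof -
  have "length \<alpha> = length \<alpha>'"
    using ominus_longer_prefix_decomposable[OF assms(1,3) eq]
      ominus_longer_prefix_decomposable[OF assms(4,6) eq[symmetric]] assms(2,5)
    by (meson linorder_neqE_nat)
  then show ?thesis
    using eq by (auto simp: ominus_def)
qed

section \<open>Left-to-right records\<close>

definition lr_records :: "('a \<Rightarrow> 'a \<Rightarrow> bool) \<Rightarrow> 'a list \<Rightarrow> nat" where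
  "lr_records R p = card {i. i < length p \<and> (\<forall>j<i. R (p ! i) (p ! j))}"

lemma all_less_add_iff: "(\<forall>j < k + (n::nat). P j) \<longleftrightarrow> (\<forall>j < n. P j) \<and> (\<forall>j < k. P (j + n))"
proof (intro iffI conjI allI impI)
  fix j assume "(\<forall>j < n. P j) \<and> (\<forall>j < k. P (j + n))" "j < k + n"
  then show "P j"
    by (cases "j < n") (auto dest: spec[of _ "j - n"])
qed simp_all

lemma Collect_less_add_split:
  "{i. i < n + (m::nat) \<and> Q i} = {i. i < n \<and> Q i} \<union> (\<lambda>k. k + n) ` {k. k < m \<and> Q (k + n)}"
proof (intro set_eqI iffI)
  fix i assume "i \<in> {i. i < n + m \<and> Q i}"
  then show "i \<in> {i. i < n \<and> Q i} \<union> (\<lambda>k. k + n) ` {k. k < m \<and> Q (k + n)}"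
    by (cases "i < n") (auto simp: image_iff intro!: exI[of _ "i - n"])
qed auto

lemma lr_records_append:
  "lr_records R (a @ c) = lr_records R a +
     card {k. k < length c \<and> (\<forall>j<k. R (c ! k) (c ! j)) \<and> (\<forall>x \<in> set a. R (c ! k) x)}"
proof -
  have "inj (\<lambda>k::nat. k + length a)" by (simp add: inj_on_def)
  then show ?thesis
    unfolding lr_records_def length_append Collect_less_add_split
    by (subst card_Un_disjoint)
      (auto simp: nth_append all_less_add_iff all_set_conv_all_nth card_image inj_on_subset conj_commute
         intro!: arg_cong2[where f = "(+)"] arg_cong[where f = card])
qed

lemma lr_records_append_dominating:
  assumes "\<And>x y. x \<in> set a \<Longrightarrow> y \<in> set c \<Longrightarrow> R y x"
  shows "lr_records R (a @ c) = lr_records R a + lr_records R c"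
proof -
  have "{k. k < length c \<and> (\<forall>j<k. R (c ! k) (c ! j)) \<and> (\<forall>x \<in> set a. R (c ! k) x)}
      = {k. k < length c \<and> (\<forall>j<k. R (c ! k) (c ! j))}"
    using assms nth_mem by blast
  then show ?thesis
    unfolding lr_records_append by (simp add: lr_records_def)
qed

lemma lr_records_append_dominated:
  assumes "a \<noteq> []" "\<And>x y. x \<in> set a \<Longrightarrow> y \<in> set c \<Longrightarrow> \<not> R y x"
  shows "lr_records R (a @ c) = lr_records R a"
proof -
  have "\<not> R (c ! k) (hd a)" if "k < length c" for k
    using assms that by simp
  then show ?thesis
    unfolding lr_records_append using hd_in_set[OF assms(1)] by fastforce
qed

lemma lr_records_map:
  assumes "\<And>x y. x \<in> set p \<Longrightarrow> y \<in> set p \<Longrightarrow> R (f x) (f y) \<longleftrightarrow> R' x y"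
  shows "lr_records R (map f p) = lr_records R' p"
proof -
  have "R (f (p ! i)) (f (p ! j)) \<longleftrightarrow> R' (p ! i) (p ! j)" if "j < i" "i < length p" for i j
    using that by (simp add: assms)
  then show ?thesis
    unfolding lr_records_def by (auto intro!: arg_cong[where f = card])
qed

lemma lr_records_singleton: "lr_records R [x] = 1"
proof -
  have "{i. i < length [x] \<and> (\<forall>j<i. R ([x] ! i) ([x] ! j))} = {0}" by auto
  then show ?thesis by (simp add: lr_records_def)
qed

lemma all_less_reflect_iff:
  fixes i n :: nat
  assumes "i < n"
  shows "(\<forall>j<i. P (n - Suc j)) \<longleftrightarrow> (\<forall>j. n - Suc i < j \<and> j < n \<longrightarrow> P j)"
proof (intro iffI allI impI)
  fix j assume "\<forall>j<i. P (n - Suc j)" "n - Suc i < j \<and> j < n"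
  moreover have "n - Suc j < i" "n - Suc (n - Suc j) = j"
    using \<open>n - Suc i < j \<and> j < n\<close> by arith+
  ultimately show "P j" by metis
next
  fix j assume "\<forall>j. n - Suc i < j \<and> j < n \<longrightarrow> P j" "j < i"
  then show "P (n - Suc j)"
    using assms by simp
qed

lemma lr_records_rev:
  "lr_records R (rev p) = card {i. i < length p \<and> (\<forall>j. i < j \<and> j < length p \<longrightarrow> R (p ! i) (p ! j))}"
  (is "_ = card ?right")
proof -
  let ?reflect = "\<lambda>i. length p - Suc i"
  let ?left = "{i. i < length (rev p) \<and> (\<forall>j<i. R (rev p ! i) (rev p ! j))}"
  have key: "i \<in> ?left \<longleftrightarrow> ?reflect i \<in> ?right" if "i < length p" for i
    using that by (auto simp: rev_nth all_less_reflect_iff[symmetric])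
  have "bij_betw ?reflect ?left ?right"
  proof (rule bij_betw_byWitness[of _ ?reflect])
    show "?reflect ` ?right \<subseteq> ?left"
      using key by (force simp: Suc_diff_Suc)
  qed (use key in auto)
  then show ?thesis
    unfolding lr_records_def by (rule bij_betw_same_card)
qed

lemma lmax_lr_records: "lmax p = lr_records (>) p"
  by (simp add: lmax_def lr_records_def)

lemma lmin_lr_records: "lmin p = lr_records (<) p"
  by (simp add: lmin_def lr_records_def)

lemma rmax_lr_records: "rmax p = lr_records (>) (rev p)"
  by (simp add: rmax_def lr_records_rev)

lemma rmin_lr_records: "rmin p = lr_records (<) (rev p)"
  by (simp add: rmin_def lr_records_rev)

lemma statistics_rev:
  "lmax (rev p) = rmax p" "rmax (rev p) = lmax p" "lmin (rev p) = rmin p" "rmin (rev p) = lmin p"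
  by (simp_all add: lmax_lr_records rmax_lr_records lmin_lr_records rmin_lr_records)

lemma lr_records_shift:
  "lr_records (<) (map (\<lambda>z. z + k) p) = lr_records (<) p"
  "lr_records (>) (map (\<lambda>z. z + k) p) = lr_records (>) (p :: nat list)"
  by (simp_all add: lr_records_map)

lemma oplus_statistics:
  assumes "separable a" "separable b"
  shows "lmax (oplus a b) = lmax a + lmax b" "rmax (oplus a b) = rmax b"
    and "lmin (oplus a b) = lmin a" "rmin (oplus a b) = rmin a + rmin b"
proof -
  have lt: "x < y + length a" if "x \<in> set a" "y \<in> set b" for x y
    using oplus_blocks_less assms that .
  have ne: "a \<noteq> []" "b \<noteq> []"
    using assms separable_range by auto
  show "lmax (oplus a b) = lmax a + lmax b"
    unfolding lmax_lr_records oplus_def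
    by (subst lr_records_append_dominating) (use lt lr_records_shift in auto)
  show "lmin (oplus a b) = lmin a"
    unfolding lmin_lr_records oplus_def
    by (subst lr_records_append_dominated) (use lt ne in \<open>auto dest: less_asym\<close>)
  show "rmax (oplus a b) = rmax b"
    unfolding rmax_lr_records oplus_def rev_append rev_map
    by (subst lr_records_append_dominated) (use lt ne lr_records_shift in \<open>auto dest: less_asym\<close>)
  show "rmin (oplus a b) = rmin a + rmin b"
    unfolding rmin_lr_records oplus_def rev_append rev_map
    by (subst lr_records_append_dominating) (use lt lr_records_shift in auto)
qed

lemma ominus_statistics:
  assumes "separable a" "separable b"
  shows "lmax (ominus a b) = lmax a" "rmax (ominus a b) = rmax a + rmax b"
    and "lmin (ominus a b) = lmin a + lmin b" "rmin (ominus a b) = rmin b"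
proof -
  have gt: "y < x + length b" if "x \<in> set a" "y \<in> set b" for x y
    using ominus_blocks_greater assms that .
  have ne: "a \<noteq> []" "b \<noteq> []"
    using assms separable_range by auto
  show "lmax (ominus a b) = lmax a"
    unfolding lmax_lr_records ominus_def
    by (subst lr_records_append_dominated) (use gt ne lr_records_shift in \<open>auto dest: less_asym\<close>)
  show "lmin (ominus a b) = lmin a + lmin b"
    unfolding lmin_lr_records ominus_def
    by (subst lr_records_append_dominating) (use gt lr_records_shift in auto)
  show "rmax (ominus a b) = rmax a + rmax b"
    unfolding rmax_lr_records ominus_def rev_append rev_map
    by (subst lr_records_append_dominating) (use gt lr_records_shift in auto)
  show "rmin (ominus a b) = rmin b"
    unfolding rmin_lr_records ominus_def rev_append rev_map
    by (subst lr_records_append_dominated) (use gt ne in \<open>auto dest: less_asym\<close>)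
qed

lemma singleton_statistics: "lmax [x] = 1" "rmax [x] = 1" "lmin [x] = 1" "rmin [x] = 1"
  by (simp_all add: lmax_lr_records rmax_lr_records lmin_lr_records rmin_lr_records lr_records_singleton)

definition complement :: "nat list \<Rightarrow> nat list" where
  "complement p = map (\<lambda>a. Suc (length p) - a) p"

lemma length_complement [simp]: "length (complement p) = length p"
  by (simp add: complement_def)

lemma complement_oplus:
  "separable a \<Longrightarrow> separable b \<Longrightarrow> complement (oplus a b) = ominus (complement a) (complement b)"
  using separable_range[of a] separable_range[of b]
  by (auto simp: complement_def oplus_def ominus_def subset_iff)

lemma complement_ominus:
  "separable a \<Longrightarrow> separable b \<Longrightarrow> complement (ominus a b) = oplus (complement a) (complement b)"
  using separable_range[of a] separable_range[of b]
  by (auto simp: complement_def oplus_def ominus_def subset_iff)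

lemma separable_complement: "separable p \<Longrightarrow> separable (complement p)"
proof (induction rule: separable.induct)
  case sep_one
  then show ?case by (simp add: complement_def separable_one)
qed (simp_all add: complement_oplus complement_ominus separable.intros)

lemma complement_complement: "separable p \<Longrightarrow> complement (complement p) = p"
  using separable_range[of p] by (auto simp: complement_def subset_iff intro!: map_idI)

lemma complement_rev: "complement (rev p) = rev (complement p)"
  by (simp add: complement_def rev_map)

lemma lmin_rev_complement: "separable p \<Longrightarrow> lmin (rev (complement p)) = rmax p"
  unfolding lmin_lr_records rmax_lr_records complement_def rev_map
  using separable_range[of p] by (intro lr_records_map) (auto simp: subset_iff)

section \<open>Generating functions\<close>

lemma GF_nth: "GF P w $ n = (\<Sum>p | length p = n \<and> P p. w p)"
  by (simp add: GF_def)

lemma finite_separable_of_length: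
  assumes "\<And>p. P p \<Longrightarrow> separable p"
  shows "finite {p. length p = n \<and> P p}"
proof (rule finite_subset)
  show "{p. length p = n \<and> P p} \<subseteq> {p. set p \<subseteq> {1..n} \<and> length p = n}"
    using assms separable_range by blast
qed (simp add: finite_lists_length_eq)

lemma GF_cong: "(\<And>p. P p \<longleftrightarrow> Q p) \<Longrightarrow> (\<And>p. P p \<Longrightarrow> w p = w' p) \<Longrightarrow> GF P w = GF Q w'"
  unfolding GF_def by (auto intro!: arg_cong[where f = Abs_fps] sum.cong)

lemma GF_singleton: "GF (\<lambda>p. p = [1]) w = fps_const (w [1]) * fps_X"
proof (rule fps_ext)
  fix n
  have singleton: "{p. length p = n \<and> p = [1]} = (if n = 1 then {[1]} else {})" by auto
  show "GF (\<lambda>p. p = [1]) w $ n = (fps_const (w [1]) * fps_X) $ n"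
    unfolding GF_nth singleton by simp
qed

lemma GF_split:
  assumes "\<And>n. finite {p. length p = n \<and> P p}"
  shows "GF P w = GF (\<lambda>p. P p \<and> Q p) w + GF (\<lambda>p. P p \<and> \<not> Q p) w"
proof (rule fps_ext)
  fix n
  let ?A = "{p. length p = n \<and> P p \<and> Q p}" and ?B = "{p. length p = n \<and> P p \<and> \<not> Q p}"
  have union: "{p. length p = n \<and> P p} = ?A \<union> ?B" by auto
  have "finite ?A" "finite ?B"
    by (rule finite_subset[OF _ assms[of n]], blast)+
  then show "GF P w $ n = (GF (\<lambda>p. P p \<and> Q p) w + GF (\<lambda>p. P p \<and> \<not> Q p) w) $ n"
    unfolding fps_add_nth GF_nth union by (subst sum.union_disjoint) auto
qed

lemma GF_reindex:
  assumes "\<And>p. Q p \<Longrightarrow> P (g p)" "\<And>p. P p \<Longrightarrow> Q (h p)"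
    and "\<And>p. Q p \<Longrightarrow> h (g p) = p" "\<And>p. P p \<Longrightarrow> g (h p) = p"
    and "\<And>p. Q p \<Longrightarrow> length (g p) = length p" "\<And>p. P p \<Longrightarrow> length (h p) = length p"
    and "\<And>p. Q p \<Longrightarrow> w (g p) = w' p"
  shows "GF P w = GF Q w'"
proof (rule fps_ext)
  fix n
  have w': "w' (h p) = w p" if "P p" for p
    using assms that by metis
  show "GF P w $ n = GF Q w' $ n"
    unfolding GF_nth by (rule sum.reindex_bij_witness[where i = g and j = h]) (auto simp: assms w')
qed

lemma GF_mult:
  fixes f :: "nat list \<Rightarrow> nat list \<Rightarrow> nat list"
  assumes finA: "\<And>n. finite {p. length p = n \<and> A p}"
    and finB: "\<And>n. finite {p. length p = n \<and> B p}"
    and length: "\<And>a b. A a \<Longrightarrow> B b \<Longrightarrow> length (f a b) = length a + length b"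
    and inj: "\<And>a b a' b'. A a \<Longrightarrow> B b \<Longrightarrow> A a' \<Longrightarrow> B b' \<Longrightarrow> f a b = f a' b' \<Longrightarrow> a = a' \<and> b = b'"
    and C: "\<And>p. C p \<longleftrightarrow> (\<exists>a b. A a \<and> B b \<and> p = f a b)"
    and weight: "\<And>a b. A a \<Longrightarrow> B b \<Longrightarrow> w (f a b) = w1 a * w2 b"
  shows "GF C w = GF A w1 * GF B w2"
proof (rule fps_ext)
  fix n
  let ?A = "\<lambda>i. {p. length p = i \<and> A p}" and ?B = "\<lambda>i. {p. length p = i \<and> B p}"
  define D where "D = {(a, b). A a \<and> B b \<and> length a + length b = n}"
  have D_eq: "D = (\<Union>i\<in>{0..n}. ?A i \<times> ?B (n - i))"
    unfolding D_def by auto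
  have "(GF A w1 * GF B w2) $ n = (\<Sum>i=0..n. (\<Sum>a\<in>?A i. w1 a) * (\<Sum>b\<in>?B (n - i). w2 b))"
    by (simp add: fps_mult_nth GF_nth)
  also have "\<dots> = (\<Sum>i=0..n. \<Sum>(a, b)\<in>?A i \<times> ?B (n - i). w1 a * w2 b)"
    by (simp add: sum_product sum.cartesian_product)
  also have "\<dots> = (\<Sum>(a, b)\<in>D. w1 a * w2 b)"
    unfolding D_eq by (rule sum.UNION_disjoint[symmetric]) (auto simp: finA finB)
  also have "\<dots> = (\<Sum>(a, b)\<in>D. w (f a b))"
    by (rule sum.cong) (auto simp: D_def weight)
  also have "\<dots> = sum w (case_prod f ` D)"
    by (subst sum.reindex) (auto simp: inj_on_def D_def dest: inj intro!: sum.cong)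
  also have "case_prod f ` D = {p. length p = n \<and> C p}"
    unfolding D_def using C length by auto
  finally show "GF C w $ n = (GF A w1 * GF B w2) $ n"
    by (simp add: GF_nth)
qed

lemma GF_singleton_or:
  assumes "\<And>n. finite {p. length p = n \<and> Q p}" "\<not> Q [1]"
  shows "GF (\<lambda>p. p = [1] \<or> Q p) w = fps_const (w [1]) * fps_X + GF Q w"
proof -
  have "finite {p. length p = n \<and> (p = [1] \<or> Q p)}" for n
    by (rule finite_subset[of _ "insert [1] {p. length p = n \<and> Q p}"]) (use assms(1) in auto)
  then have "GF (\<lambda>p. p = [1] \<or> Q p) w
      = GF (\<lambda>p. (p = [1] \<or> Q p) \<and> p = [1]) w + GF (\<lambda>p. (p = [1] \<or> Q p) \<and> p \<noteq> [1]) w"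
    by (rule GF_split)
  also have "\<dots> = GF (\<lambda>p. p = [1]) w + GF Q w"
    using assms(2) by (intro arg_cong2[where f = "(+)"] GF_cong) auto
  finally show ?thesis
    by (simp only: GF_singleton)
qed

lemma GF_separable_not_decomposable:
  "GF (\<lambda>p. separable p \<and> \<not> decomposable (<) p) w
     = fps_const (w [1]) * fps_X + GF (\<lambda>p. separable p \<and> decomposable (>) p) w"
  "GF (\<lambda>p. separable p \<and> \<not> decomposable (>) p) w
     = fps_const (w [1]) * fps_X + GF (\<lambda>p. separable p \<and> decomposable (<) p) w"
proof -
  have "GF (\<lambda>p. p = [1] \<or> separable p \<and> decomposable R p) w
      = fps_const (w [1]) * fps_X + GF (\<lambda>p. separable p \<and> decomposable R p) w" for R
    by (rule GF_singleton_or) (auto intro: finite_separable_of_length simp: not_decomposable_one)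
  then show "GF (\<lambda>p. separable p \<and> \<not> decomposable (<) p) w
      = fps_const (w [1]) * fps_X + GF (\<lambda>p. separable p \<and> decomposable (>) p) w"
    "GF (\<lambda>p. separable p \<and> \<not> decomposable (>) p) w
      = fps_const (w [1]) * fps_X + GF (\<lambda>p. separable p \<and> decomposable (<) p) w"
    by (simp_all only: separable_not_decomposable_iff)
qed

lemma GF_separable_split:
  "GF separable w = GF (\<lambda>p. separable p \<and> \<not> decomposable (<) p) w
     + GF (\<lambda>p. separable p \<and> decomposable (<) p) w"
  by (subst add.commute) (rule GF_split, simp add: finite_separable_of_length)

lemma GF_direct_sum:
  assumes "\<And>a b. separable a \<Longrightarrow> \<not> decomposable (<) a \<Longrightarrow> separable b \<Longrightarrow> w (oplus a b) = w1 a * w2 b"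
  shows "GF (\<lambda>p. separable p \<and> decomposable (<) p) w
    = GF (\<lambda>p. separable p \<and> \<not> decomposable (<) p) w1 * GF separable w2"
proof (rule GF_mult[where f = oplus])
  show "separable p \<and> decomposable (<) p \<longleftrightarrow>
      (\<exists>a b. (separable a \<and> \<not> decomposable (<) a) \<and> separable b \<and> p = oplus a b)" for p
    using separable_direct_sum_iff[of p] oplus_factorization_exists decomposable_oplus sep_oplus by metis
qed (auto simp: assms intro: finite_separable_of_length dest: oplus_factorization_unique)

lemma GF_skew_sum:
  assumes "\<And>a b. separable a \<Longrightarrow> \<not> decomposable (>) a \<Longrightarrow> separable b \<Longrightarrow> w (ominus a b) = w1 a * w2 b"
  shows "GF (\<lambda>p. separable p \<and> decomposable (>) p) w
    = GF (\<lambda>p. separable p \<and> \<not> decomposable (>) p) w1 * GF separable w2"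
proof (rule GF_mult[where f = ominus])
  show "separable p \<and> decomposable (>) p \<longleftrightarrow>
      (\<exists>a b. (separable a \<and> \<not> decomposable (>) a) \<and> separable b \<and> p = ominus a b)" for p
    using separable_skew_sum_iff[of p] ominus_factorization_exists decomposable_ominus sep_ominus by metis
qed (auto simp: assms intro: finite_separable_of_length dest: ominus_factorization_unique)

lemma GF_separable_lmax: "GF separable (\<lambda>p. z ^ lmax p) = S_z z"
  unfolding S_z_def
  by (rule GF_reindex[where g = rev and h = rev]) (auto simp: separable_rev statistics_rev)

lemma GF_separable_lmin: "GF separable (\<lambda>p. z ^ lmin p) = S_z z"
  unfolding S_z_def
  by (rule GF_reindex[where g = "\<lambda>p. rev (complement p)" and h = "\<lambda>p. rev (complement p)"])
    (auto simp: separable_rev separable_complement complement_rev complement_complement lmin_rev_complement)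

lemma S_z_nth_zero: "S_z z $ 0 = 0"
proof -
  have no_empty: "{p. length p = 0 \<and> separable p} = {}"
    using separable_range by auto
  show ?thesis
    unfolding S_z_def GF_nth no_empty by simp
qed

lemma E_fps_system_solution:
  fixes a b a1 T Sx Sy Su E :: "real fps"
  assumes A1: "b = fps_const (x * u) * fps_X + a * Sx"
    and A2: "a = fps_const (x * u) * fps_X + b * Su"
    and A3: "Sx = a1 + a1 * Sx"
    and A4: "T = fps_const (x * y) * fps_X + (fps_const (x * y) * fps_X + a1 * T) * Sy + a1 * T"
    and A5: "E = fps_const (x * y * u) * fps_X + a * T"
    and zero: "Sx $ 0 = 0" "Sy $ 0 = 0" "Su $ 0 = 0"
  shows "E = fps_const (x * y * u) * fps_X + (Sx + 1) * (Sy + 1) * (Su + 1) * fps_X ^ 2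
      * fps_const (x ^ 2 * y * u) * inverse ((1 - Sx * Su) * (1 - Sx * Sy))"
proof -
  define D where "D = (1 - Sx * Su) * (1 - Sx * Sy)"
  have "inverse D * D = 1"
    using zero by (intro inverse_mult_eq_1) (simp add: D_def)
  have a: "a * (1 - Sx * Su) = fps_const (x * u) * fps_X * (1 + Su)"
    using A1 A2 by algebra
  have T: "T * (1 - Sx * Sy) = fps_const (x * y) * fps_X * (1 + Sx) * (1 + Sy)"
    using A3 A4 by algebra
  have const: "fps_const (x * u) * fps_const (x * y) = fps_const (x ^ 2 * y * u)"
    by (simp add: power2_eq_square mult_ac)
  have "a * T * D = (Sx + 1) * (Sy + 1) * (Su + 1) * fps_X ^ 2 * fps_const (x ^ 2 * y * u)"
    unfolding D_def using a T const by algebra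
  then have "a * T = (Sx + 1) * (Sy + 1) * (Su + 1) * fps_X ^ 2 * fps_const (x ^ 2 * y * u) * inverse D"
    using \<open>inverse D * D = 1\<close> by algebra
  then show ?thesis
    using A5 by (simp add: D_def)
qed

section \<open>The functional equations\<close>

lemma GF_skew_indecomposable_lmax_lmin:
  "GF (\<lambda>p. separable p \<and> \<not> decomposable (>) p) (\<lambda>p. x ^ lmax p * u ^ lmin p)
     = fps_const (x * u) * fps_X
       + GF (\<lambda>p. separable p \<and> \<not> decomposable (<) p) (\<lambda>p. x ^ lmax p * u ^ lmin p) * S_z x"
proof -
  have "GF (\<lambda>p. separable p \<and> decomposable (<) p) (\<lambda>p. x ^ lmax p * u ^ lmin p)
      = GF (\<lambda>p. separable p \<and> \<not> decomposable (<) p) (\<lambda>p. x ^ lmax p * u ^ lmin p)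
        * GF separable (\<lambda>p. x ^ lmax p)"
    by (rule GF_direct_sum) (simp add: oplus_statistics power_add)
  then show ?thesis
    by (simp add: GF_separable_not_decomposable singleton_statistics GF_separable_lmax)
qed

lemma GF_sum_indecomposable_lmax_lmin:
  "GF (\<lambda>p. separable p \<and> \<not> decomposable (<) p) (\<lambda>p. x ^ lmax p * u ^ lmin p)
     = fps_const (x * u) * fps_X
       + GF (\<lambda>p. separable p \<and> \<not> decomposable (>) p) (\<lambda>p. x ^ lmax p * u ^ lmin p) * S_z u"
proof -
  have "GF (\<lambda>p. separable p \<and> decomposable (>) p) (\<lambda>p. x ^ lmax p * u ^ lmin p)
      = GF (\<lambda>p. separable p \<and> \<not> decomposable (>) p) (\<lambda>p. x ^ lmax p * u ^ lmin p)
        * GF separable (\<lambda>p. u ^ lmin p)"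
    by (rule GF_skew_sum) (simp add: ominus_statistics power_add mult_ac)
  then show ?thesis
    by (simp add: GF_separable_not_decomposable singleton_statistics GF_separable_lmin)
qed

lemma S_z_sum_indecomposable:
  "S_z x = GF (\<lambda>p. separable p \<and> \<not> decomposable (<) p) (\<lambda>p. x ^ lmax p)
     + GF (\<lambda>p. separable p \<and> \<not> decomposable (<) p) (\<lambda>p. x ^ lmax p) * S_z x"
proof -
  have "GF (\<lambda>p. separable p \<and> decomposable (<) p) (\<lambda>p. x ^ lmax p)
      = GF (\<lambda>p. separable p \<and> \<not> decomposable (<) p) (\<lambda>p. x ^ lmax p) * GF separable (\<lambda>p. x ^ lmax p)"
    by (rule GF_direct_sum) (simp add: oplus_statistics power_add)
  then show ?thesis
    by (metis GF_separable_split GF_separable_lmax)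
qed

lemma GF_separable_lmax_rmax:
  fixes x y :: real and a1 T :: "real fps"
  defines "a1 \<equiv> GF (\<lambda>p. separable p \<and> \<not> decomposable (<) p) (\<lambda>p. x ^ lmax p)"
    and "T \<equiv> GF separable (\<lambda>p. x ^ lmax p * y ^ rmax p)"
  shows "T = fps_const (x * y) * fps_X + (fps_const (x * y) * fps_X + a1 * T) * S_z y + a1 * T"
proof -
  have direct_sum: "GF (\<lambda>p. separable p \<and> decomposable (<) p) (\<lambda>p. x ^ lmax p * y ^ rmax p) = a1 * T"
    unfolding a1_def T_def by (rule GF_direct_sum) (simp add: oplus_statistics power_add)
  have skew_ind: "GF (\<lambda>p. separable p \<and> \<not> decomposable (>) p) (\<lambda>p. x ^ lmax p * y ^ rmax p)
      = fps_const (x * y) * fps_X + a1 * T"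
    by (simp add: GF_separable_not_decomposable singleton_statistics direct_sum)
  have "T = GF (\<lambda>p. separable p \<and> \<not> decomposable (<) p) (\<lambda>p. x ^ lmax p * y ^ rmax p) + a1 * T"
    using GF_separable_split[of "\<lambda>p. x ^ lmax p * y ^ rmax p"] by (simp only: direct_sum flip: T_def)
  also have "GF (\<lambda>p. separable p \<and> \<not> decomposable (<) p) (\<lambda>p. x ^ lmax p * y ^ rmax p)
      = fps_const (x * y) * fps_X + GF (\<lambda>p. separable p \<and> decomposable (>) p) (\<lambda>p. x ^ lmax p * y ^ rmax p)"
    by (simp add: GF_separable_not_decomposable singleton_statistics)
  also have "GF (\<lambda>p. separable p \<and> decomposable (>) p) (\<lambda>p. x ^ lmax p * y ^ rmax p)
      = (fps_const (x * y) * fps_X + a1 * T) * S_z y"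
    unfolding S_z_def skew_ind[symmetric]
    by (rule GF_skew_sum) (simp add: ominus_statistics power_add mult_ac)
  finally show ?thesis .
qed

lemma GF_skew_indecomposable:
  "GF (\<lambda>p. separable p \<and> \<not> decomposable (>) p) (\<lambda>p. x ^ lmax p * y ^ rmax p * u ^ lmin p)
     = E_fps x y u"
proof -
  let ?sum_ind = "\<lambda>p. separable p \<and> \<not> decomposable (<) p"
  define a where "a = GF ?sum_ind (\<lambda>p. x ^ lmax p * u ^ lmin p)"
  define T where "T = GF separable (\<lambda>p. x ^ lmax p * y ^ rmax p)"
  have "GF (\<lambda>p. separable p \<and> decomposable (<) p) (\<lambda>p. x ^ lmax p * y ^ rmax p * u ^ lmin p) = a * T"
    unfolding a_def T_def by (rule GF_direct_sum) (simp add: oplus_statistics power_add mult_ac)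
  then have "GF (\<lambda>p. separable p \<and> \<not> decomposable (>) p) (\<lambda>p. x ^ lmax p * y ^ rmax p * u ^ lmin p)
      = fps_const (x * y * u) * fps_X + a * T"
    by (simp add: GF_separable_not_decomposable singleton_statistics)
  then show ?thesis
    unfolding E_fps_def a_def T_def
    by (rule E_fps_system_solution[OF GF_skew_indecomposable_lmax_lmin GF_sum_indecomposable_lmax_lmin
          S_z_sum_indecomposable GF_separable_lmax_rmax _ S_z_nth_zero S_z_nth_zero S_z_nth_zero])
qed

lemma GF_separable_irreducible:
  "GF (\<lambda>p. separable p \<and> irreducible_perm p) (\<lambda>p. x ^ lmax p * y ^ rmax p * u ^ lmin p * v ^ rmin p)
     = fps_const (x * y * u * v) * fps_X
       + E_fps x y u * GF separable (\<lambda>p. y ^ rmax p * u ^ lmin p * v ^ rmin p)"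
  (is "GF _ ?w = _")
proof -
  have "GF (\<lambda>p. separable p \<and> irreducible_perm p) ?w = GF (\<lambda>p. separable p \<and> \<not> decomposable (<) p) ?w"
    by (rule GF_cong) (auto simp: separable_irreducible_iff)
  also have "\<dots> = fps_const (x * y * u * v) * fps_X + GF (\<lambda>p. separable p \<and> decomposable (>) p) ?w"
    by (simp add: GF_separable_not_decomposable singleton_statistics)
  also have "GF (\<lambda>p. separable p \<and> decomposable (>) p) ?w
      = E_fps x y u * GF separable (\<lambda>p. y ^ rmax p * u ^ lmin p * v ^ rmin p)"
    unfolding GF_skew_indecomposable[symmetric]
    by (rule GF_skew_sum) (simp add: ominus_statistics power_add mult_ac)
  finally show ?thesis .
qed

lemma GF_separable_reducible:
  "GF (\<lambda>p. separable p \<and> reducible_perm p) (\<lambda>p. x ^ lmax p * y ^ rmax p * u ^ lmin p * v ^ rmin p)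
     = E_fps y x v * GF separable (\<lambda>p. x ^ lmax p * u ^ lmin p * v ^ rmin p)"
proof -
  have "GF (\<lambda>p. separable p \<and> reducible_perm p) (\<lambda>p. x ^ lmax p * y ^ rmax p * u ^ lmin p * v ^ rmin p)
      = GF (\<lambda>p. separable p \<and> decomposable (>) p) (\<lambda>p. y ^ lmax p * x ^ rmax p * v ^ lmin p * u ^ rmin p)"
    by (rule GF_reindex[where g = rev and h = rev])
      (auto simp: separable_rev decomposable_rev reducible_perm_iff statistics_rev mult_ac)
  also have "\<dots> = E_fps y x v * GF separable (\<lambda>p. x ^ rmax p * v ^ lmin p * u ^ rmin p)"
    unfolding GF_skew_indecomposable[symmetric]
    by (rule GF_skew_sum) (simp add: ominus_statistics power_add mult_ac)
  also have "GF separable (\<lambda>p. x ^ rmax p * v ^ lmin p * u ^ rmin p)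
      = GF separable (\<lambda>p. x ^ lmax p * u ^ lmin p * v ^ rmin p)"
    by (rule GF_reindex[where g = rev and h = rev]) (auto simp: separable_rev statistics_rev mult_ac)
  finally show ?thesis .
qed

lemma GF_separable_irreducible_reducible:
  "GF separable w = GF (\<lambda>p. separable p \<and> irreducible_perm p) w + GF (\<lambda>p. separable p \<and> reducible_perm p) w"
  by (subst GF_split[where Q = irreducible_perm], simp add: finite_separable_of_length)
    (auto intro!: arg_cong2[where f = "(+)"] GF_cong simp: separable_irreducible_iff reducible_perm_iff)

theorem theorem9:
  fixes x y u v :: real
  shows
    "GF (\<lambda>p. separable p \<and> irreducible_perm p)
        (\<lambda>p. x ^ lmax p * y ^ rmax p * u ^ lmin p * v ^ rmin p)
     = fps_const (x * y * u * v) * fps_X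
       + E_fps x y u * GF separable (\<lambda>p. y ^ rmax p * u ^ lmin p * v ^ rmin p)
   \<and> GF (\<lambda>p. separable p \<and> reducible_perm p)
        (\<lambda>p. x ^ lmax p * y ^ rmax p * u ^ lmin p * v ^ rmin p)
     = E_fps y x v * GF separable (\<lambda>p. x ^ lmax p * u ^ lmin p * v ^ rmin p)
   \<and> GF separable (\<lambda>p. x ^ lmax p * y ^ rmax p * u ^ lmin p * v ^ rmin p)
     = fps_const (x * y * u * v) * fps_X
       + E_fps x y u * GF separable (\<lambda>p. y ^ rmax p * u ^ lmin p * v ^ rmin p)
       + E_fps y x v * GF separable (\<lambda>p. x ^ lmax p * u ^ lmin p * v ^ rmin p)"
  using GF_separable_irreducible_reducible GF_separable_irreducible GF_separable_reducible by simp

end
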